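(* Let $G$ be a graph on $n$ vertices. For any integer $c\ge 2$, there are at most $\frac{2n}{c}$ bridges of $G$ both of whose endpoints have degree larger than $c$.
   Context: A bridge is an edge whose deletion increases the number of connected components of the graph. *)

theory Defs
  imports Complex_Main
begin

definition simple_graph :: "'a set \<Rightarrow> 'a set set \<Rightarrow> bool" where
  "simple_graph V E \<longleftrightarrow> finite V \<and> (\<forall>e\<in>E. e \<subseteq> V \<and> card e = 2)"

definition adj_rel :: "'a set set \<Rightarrow> ('a \<times> 'a) set" where
  "adj_rel E = {(u, v). {u, v} \<in> E}"

definition connected_rel :: "'a set \<Rightarrow> 'a set set \<Rightarrow> ('a \<times> 'a) set" where
  "connected_rel V E = (adj_rel E)\<^sup>* \<inter> (V \<times> V)"

definition components :: "'a set \<Rightarrow> 'a set set \<Rightarrow> 'a set set" where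
  "components V E = V // connected_rel V E"

definition num_components :: "'a set \<Rightarrow> 'a set set \<Rightarrow> nat" where
  "num_components V E = card (components V E)"

definition is_bridge :: "'a set \<Rightarrow> 'a set set \<Rightarrow> 'a set \<Rightarrow> bool" where
  "is_bridge V E e \<longleftrightarrow> e \<in> E \<and> num_components V (E - {e}) > num_components V E"

definition degree :: "'a set set \<Rightarrow> 'a \<Rightarrow> nat" where
  "degree E v = card {e \<in> E. v \<in> e}"

end

theory Submission
  imports Defs
begin

(* Write \<partial>S for the set of edges leaving a vertex set S, and call a bridge heavy if both its
  endpoints have degree > c. Whenever \<partial>S consists of heavy bridges and S meets one,
  c b + c + 2 \<le> |S| + |\<partial>S|, where b is the number of heavy bridges inside S. If b = 0, a heavy
  endpoint x \<in> S has more than c edges, each ending in S - {x} or lying in \<partial>S. Otherwise delete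
  an inner heavy bridge {u, v}: the vertices of S reachable from u and the remaining ones are
  joined only by that bridge, so the two boundaries have at most |\<partial>S| + 2 edges together, and
  induction on b applies to both parts. For S = V the boundary is empty, so c b \<le> n, which even
  beats the bound 2n/c. *)

definition boundary :: "'a set set \<Rightarrow> 'a set \<Rightarrow> 'a set set" where
  "boundary E S = {f \<in> E. f \<inter> S \<noteq> {} \<and> \<not> f \<subseteq> S}"

lemma sym_adj_rel: "sym (adj_rel E)"
  unfolding adj_rel_def sym_def by (auto simp: insert_commute)

lemma adj_rel_mono: "E \<subseteq> F \<Longrightarrow> adj_rel E \<subseteq> adj_rel F"
  unfolding adj_rel_def by auto

lemma rtrancl_adj_rel_Diff_edge:
  assumes "(x, y) \<in> (adj_rel (E - {{x, y}}))\<^sup>*"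
  shows "(adj_rel (E - {{x, y}}))\<^sup>* = (adj_rel E)\<^sup>*"
proof
  let ?R = "adj_rel (E - {{x, y}})"
  have "(y, x) \<in> ?R\<^sup>*"
    using assms sym_rtrancl[OF sym_adj_rel] by (meson symD)
  then have "adj_rel E \<subseteq> ?R\<^sup>*"
    using assms unfolding adj_rel_def by (auto simp: doubleton_eq_iff)
  then show "(adj_rel E)\<^sup>* \<subseteq> ?R\<^sup>*"
    by (rule rtrancl_subset_rtrancl)
  show "?R\<^sup>* \<subseteq> (adj_rel E)\<^sup>*"
    by (intro rtrancl_mono adj_rel_mono) auto
qed

lemma bridge_endpoints_disconnected:
  assumes "is_bridge V E {x, y}"
  shows "(x, y) \<notin> (adj_rel (E - {{x, y}}))\<^sup>*"
  using assms rtrancl_adj_rel_Diff_edge[of x y E]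
  unfolding is_bridge_def num_components_def components_def connected_rel_def by auto

lemma edge_meets_reachable_subset:
  assumes "f \<in> F" "card f = 2" "f \<inter> (adj_rel F)\<^sup>* `` {u} \<noteq> {}"
  shows "f \<subseteq> (adj_rel F)\<^sup>* `` {u}"
proof -
  obtain a b where f: "f = {a, b}"
    using assms(2) card_2_iff by metis
  then have "(a, b) \<in> adj_rel F" "(b, a) \<in> adj_rel F"
    using assms(1) unfolding adj_rel_def by (auto simp: insert_commute)
  then show ?thesis
    using assms(3) f by (auto intro: rtrancl_into_rtrancl)
qed

lemma card_2_other_element:
  assumes "card f = 2" "x \<in> f"
  obtains w where "f = {x, w}" "w \<noteq> x"
  using assms by (auto simp: card_2_iff doubleton_eq_iff)

lemma degree_le_boundary:
  assumes "finite E" "\<forall>f\<in>E. card f = 2" "finite S" "x \<in> S"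
  shows "degree E x + 1 \<le> card S + card (boundary E S)"
proof -
  have "{f \<in> E. x \<in> f} \<subseteq> (\<lambda>w. {x, w}) ` (S - {x}) \<union> boundary E S"
  proof
    fix f assume f: "f \<in> {f \<in> E. x \<in> f}"
    then obtain w where "f = {x, w}" "w \<noteq> x"
      using assms(2) by (auto elim: card_2_other_element)
    then show "f \<in> (\<lambda>w. {x, w}) ` (S - {x}) \<union> boundary E S"
      using f assms(4) unfolding boundary_def by auto
  qed
  moreover have "finite ((\<lambda>w. {x, w}) ` (S - {x}) \<union> boundary E S)"
    using assms(1,3) by (simp add: boundary_def)
  ultimately have "degree E x \<le> card ((\<lambda>w. {x, w}) ` (S - {x}) \<union> boundary E S)"
    unfolding degree_def by (simp add: card_mono)
  also have "\<dots> \<le> card ((\<lambda>w. {x, w}) ` (S - {x})) + card (boundary E S)"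
    by (rule card_Un_le)
  also have "\<dots> \<le> card (S - {x}) + card (boundary E S)"
    using card_image_le[of "S - {x}" "\<lambda>w. {x, w}"] assms(3) by simp
  finally show ?thesis
    using assms(3,4) card_gt_0_iff[of S] by (auto simp: card_Diff_singleton)
qed

lemma boundary_Un_subset:
  assumes "\<forall>f\<in>E. f \<inter> T \<noteq> {} \<longrightarrow> f \<inter> T' \<noteq> {} \<longrightarrow> f = e"
  shows "boundary E T \<union> boundary E T' \<subseteq> insert e (boundary E (T \<union> T'))"
  using assms unfolding boundary_def by blast

lemma card_boundary_split:
  assumes "finite E" "\<forall>f\<in>E. f \<inter> T \<noteq> {} \<longrightarrow> f \<inter> T' \<noteq> {} \<longrightarrow> f = e"
  shows "card (boundary E T) + card (boundary E T') \<le> card (boundary E (T \<union> T')) + 2"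
proof -
  have fin: "finite (boundary E S)" for S
    using assms(1) unfolding boundary_def by simp
  have "boundary E T \<inter> boundary E T' \<subseteq> {e}"
    using assms(2) unfolding boundary_def by blast
  then have "card (boundary E T \<inter> boundary E T') \<le> 1"
    using card_mono[of "{e}"] by simp
  moreover have "card (boundary E T \<union> boundary E T') \<le> card (insert e (boundary E (T \<union> T')))"
    using fin by (intro card_mono boundary_Un_subset[OF assms(2)]) auto
  moreover have "card (insert e (boundary E (T \<union> T'))) \<le> card (boundary E (T \<union> T')) + 1"
    using fin by (simp add: card_insert_if)
  ultimately show ?thesis
    using card_Un_Int[OF fin fin, of T T'] by linarith
qed

lemma card_within_Un_le:
  assumes "finite B" "\<forall>f\<in>B. f \<inter> T \<noteq> {} \<longrightarrow> f \<inter> T' \<noteq> {} \<longrightarrow> f = e"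
  shows "card {f \<in> B. f \<subseteq> T \<union> T'} \<le> card {f \<in> B. f \<subseteq> T} + card {f \<in> B. f \<subseteq> T'} + 1"
proof -
  have "{f \<in> B. f \<subseteq> T \<union> T'} \<subseteq> insert e ({f \<in> B. f \<subseteq> T} \<union> {f \<in> B. f \<subseteq> T'})"
    using assms(2) by blast
  then have "card {f \<in> B. f \<subseteq> T \<union> T'} \<le> card (insert e ({f \<in> B. f \<subseteq> T} \<union> {f \<in> B. f \<subseteq> T'}))"
    using assms(1) by (intro card_mono) simp
  also have "\<dots> \<le> card ({f \<in> B. f \<subseteq> T} \<union> {f \<in> B. f \<subseteq> T'}) + 1"
    using assms(1) by (simp add: card_insert_if)
  also have "\<dots> \<le> card {f \<in> B. f \<subseteq> T} + card {f \<in> B. f \<subseteq> T'} + 1"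
    using card_Un_le by simp
  finally show ?thesis .
qed

lemma bridge_splits:
  assumes "\<forall>f\<in>E. card f = 2" "is_bridge V E {u, v}" "{u, v} \<subseteq> S"
  obtains T T' where "S = T \<union> T'" "T \<inter> T' = {}" "u \<in> T" "v \<in> T'"
    "\<forall>f\<in>E. f \<inter> T \<noteq> {} \<longrightarrow> f \<inter> T' \<noteq> {} \<longrightarrow> f = {u, v}"
proof -
  define R where "R = (adj_rel (E - {{u, v}}))\<^sup>* `` {u}"
  show thesis
  proof (rule that[of "S \<inter> R" "S - R"])
    show "v \<in> S - R"
      using assms(3) bridge_endpoints_disconnected[OF assms(2)] unfolding R_def by blast
    show "\<forall>f\<in>E. f \<inter> (S \<inter> R) \<noteq> {} \<longrightarrow> f \<inter> (S - R) \<noteq> {} \<longrightarrow> f = {u, v}"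
    proof (intro ballI impI)
      fix f assume f: "f \<in> E" "f \<inter> (S \<inter> R) \<noteq> {}" "f \<inter> (S - R) \<noteq> {}"
      show "f = {u, v}"
      proof (rule ccontr)
        assume "f \<noteq> {u, v}"
        then have "f \<subseteq> R"
          using f assms(1) unfolding R_def by (intro edge_meets_reachable_subset) auto
        then show False
          using f(3) by blast
      qed
    qed
  qed (use assms(3) in \<open>auto simp: R_def\<close>)
qed

lemma card_heavy_bridges_within_le:
  fixes c :: nat
  assumes graph: "simple_graph V E"
    and bridge: "\<And>e. e \<in> B \<Longrightarrow> is_bridge V E e"
    and heavy: "\<And>e w. e \<in> B \<Longrightarrow> w \<in> e \<Longrightarrow> c < degree E w"
    and "S \<subseteq> V" "boundary E S \<subseteq> B" "e \<in> B" "e \<inter> S \<noteq> {}"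
  shows "c * card {f \<in> B. f \<subseteq> S} + c + 2 \<le> card S + card (boundary E S)"
  using assms(4-7)
proof (induction "card {f \<in> B. f \<subseteq> S}" arbitrary: S e rule: less_induct)
  case less
  have edges: "\<forall>f\<in>E. f \<subseteq> V \<and> card f = 2" and finV: "finite V"
    using graph unfolding simple_graph_def by auto
  then have finE: "finite E"
    by (meson Pow_iff finite_Pow_iff rev_finite_subset subsetI)
  have BE: "B \<subseteq> E"
    using bridge unfolding is_bridge_def by blast
  have fin: "finite {f \<in> B. f \<subseteq> X}" for X
    using BE by (blast intro: finite_subset[OF _ finE])
  have finS: "finite S"
    using less.prems(1) finV by (rule finite_subset)
  show ?case
  proof (cases "\<exists>f\<in>B. f \<subseteq> S")
    case False
    obtain x where x: "x \<in> e" "x \<in> S"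
      using less.prems(4) by blast
    have "c < degree E x"
      using heavy[OF less.prems(3) x(1)] .
    moreover have "degree E x + 1 \<le> card S + card (boundary E S)"
      using degree_le_boundary[OF finE _ finS x(2)] edges by blast
    moreover have "card {f \<in> B. f \<subseteq> S} = 0"
      using False by (simp add: card_eq_0_iff)
    ultimately show ?thesis
      by simp
  next
    case True
    then obtain u v where uv: "{u, v} \<in> B" "{u, v} \<subseteq> S"
      using BE edges card_2_iff by (metis subsetD)
    obtain T T' where split: "S = T \<union> T'" "T \<inter> T' = {}" "u \<in> T" "v \<in> T'"
      and crossing: "\<forall>f\<in>E. f \<inter> T \<noteq> {} \<longrightarrow> f \<inter> T' \<noteq> {} \<longrightarrow> f = {u, v}"
      using bridge_splits[OF _ bridge[OF uv(1)] uv(2)] edges by blast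
    let ?inside = "\<lambda>X. {f \<in> B. f \<subseteq> X}"
    have "{u, v} \<in> ?inside S" "{u, v} \<notin> ?inside T" "{u, v} \<notin> ?inside T'"
      using uv split by auto
    moreover have "?inside T \<subseteq> ?inside S" "?inside T' \<subseteq> ?inside S"
      using split(1) by auto
    ultimately have "?inside T \<subset> ?inside S" "?inside T' \<subset> ?inside S"
      by (metis psubsetI)+
    then have smaller: "card (?inside T) < card (?inside S)" "card (?inside T') < card (?inside S)"
      by (simp_all add: fin psubset_card_mono)
    have boundaries: "boundary E T \<subseteq> B" "boundary E T' \<subseteq> B"
      using boundary_Un_subset[OF crossing] less.prems(2) uv(1) split(1) by auto
    have "c * card (?inside T) + c + 2 \<le> card T + card (boundary E T)"
      using less.hyps[OF smaller(1) _ boundaries(1) uv(1)] less.prems(1) split by blast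
    moreover have "c * card (?inside T') + c + 2 \<le> card T' + card (boundary E T')"
      using less.hyps[OF smaller(2) _ boundaries(2) uv(1)] less.prems(1) split by blast
    moreover have "card (boundary E T) + card (boundary E T') \<le> card (boundary E S) + 2"
      using card_boundary_split[OF finE crossing] split(1) by simp
    moreover have "card S = card T + card T'"
      using finS split(1,2) by (simp add: card_Un_disjoint)
    moreover have "card (?inside S) \<le> card (?inside T) + card (?inside T') + 1"
      using card_within_Un_le[OF finite_subset[OF BE finE], of T T' "{u, v}"] crossing BE split(1)
      by blast
    then have "c * card (?inside S) \<le> c * (card (?inside T) + card (?inside T') + 1)"
      by (rule mult_le_mono2)
    then have "c * card (?inside S) \<le> c * card (?inside T) + c * card (?inside T') + c"
      by (simp add: distrib_left)
    ultimately show ?thesis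
      by linarith
  qed
qed

lemma card_heavy_bridges_le:
  fixes c :: nat
  assumes graph: "simple_graph V E"
  shows "c * card {e. is_bridge V E e \<and> (\<forall>v\<in>e. c < degree E v)} \<le> card V"
proof (cases "{e. is_bridge V E e \<and> (\<forall>v\<in>e. c < degree E v)} = {}")
  case True
  then show ?thesis
    by (simp only: card.empty mult_0_right le0)
next
  case False
  let ?B = "{e. is_bridge V E e \<and> (\<forall>v\<in>e. c < degree E v)}"
  have edges: "\<forall>f\<in>E. f \<subseteq> V \<and> card f = 2"
    using graph unfolding simple_graph_def by blast
  obtain e where e: "e \<in> ?B"
    using False by blast
  then have "e \<in> E"
    unfolding is_bridge_def by blast
  then have "e \<inter> V \<noteq> {}"
    using edges by (metis card.empty inf.absorb1 zero_neq_numeral)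
  moreover have no_boundary: "boundary E V = {}"
    using edges unfolding boundary_def by blast
  ultimately have "c * card {f \<in> ?B. f \<subseteq> V} + c + 2 \<le> card V + card (boundary E V)"
    using e by (intro card_heavy_bridges_within_le[OF graph]) auto
  moreover have "{f \<in> ?B. f \<subseteq> V} = ?B"
    using edges unfolding is_bridge_def by auto
  ultimately show ?thesis
    using no_boundary by simp
qed

theorem lemma9p2:
  fixes V :: "'a set" and E :: "'a set set" and n c :: nat
  assumes "simple_graph V E" and "card V = n" and "c \<ge> 2"
  shows "real (card {e. is_bridge V E e \<and> (\<forall>v\<in>e. degree E v > c)}) \<le> 2 * real n / real c"
proof -
  have "real c * real (card {e. is_bridge V E e \<and> (\<forall>v\<in>e. degree E v > c)}) \<le> 2 * real n"
    using card_heavy_bridges_le[OF assms(1), of c] assms(2) by (simp flip: of_nat_mult)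
  then show ?thesis
    using assms(3) by (simp add: pos_le_divide_eq mult.commute)
qed

end
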